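(* Let $X$ be a finite simplicial complex, $d\ge0$, and $F:C_{d+1}(X)\to C_{d+1}(X)$ an arbitrary map. The system $\dot\theta=B_{d+1}F(B_{d+1}^\intercal\theta)$, seen as an ODE on $\operatorname{im}(B_{d+1})$, is conjugate to both systems on $\operatorname{im}(B_{d+1}^\intercal)$ $$\dot x=(B_{d+1}^\intercal B_{d+1})F(x)\quad\text{and}\quad\dot y=P_{d+1}F(B_{d+1}^\intercal B_{d+1}y).$$ Similarly, for an arbitrary map $H:C_{d-1}(X)\to C_{d-1}(X)$, the system $\dot\theta=B_d^\intercal H(B_d\theta)$, seen as an ODE on $\operatorname{im}(B_d^\intercal)$, is conjugate to both systems on $\operatorname{im}(B_d)$ $$\dot x=(B_dB_d^\intercal)H(x)\quad\text{and}\quad\dot y=Q_{d-1}H(B_dB_d^\intercal y).$$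
   Context: A finite simplicial complex $X$ on vertex set $\{1,\dots,n\}$ is a collection of nonempty subsets closed under taking nonempty subsets; $X_d$ is the set of simplices with $d+1$ vertices; a $d$-simplex with vertices $i_0<\dots<i_d$ is written $[i_0,\dots,i_d]$. $C_d(X)$ is the real vector space with basis $X_d$ and inner product making $X_d$ orthonormal ($C_{-1}(X)=0$). The boundary map is $\partial_d[i_0,\dots,i_d]=\sum_{k=0}^d(-1)^k[i_0,\dots,\widehat{i_k},\dots,i_d]$ with matrix $B_d$; $B_d^\intercal$ its transpose. $P_{d+1}$ is the orthogonal projection of $C_{d+1}(X)$ onto $\operatorname{im}(B_{d+1}^\intercal)$; $Q_{d-1}$ is the orthogonal projection of $C_{d-1}(X)$ onto $\operatorname{im}(B_d)$. ODEs $\dot u=A(u)$ on $U$ and $\dot v=C(v)$ on $V$ are conjugate if there is an invertible linear map $\Phi:U\to V$ with $\Phi\circ A=C\circ\Phi$. *)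

theory Defs
  imports Main "HOL-Analysis.Analysis"
begin

text \<open>We index chain groups by the NUMBER OF VERTICES k of their simplices:
  the paper's C_d(X) is chains X (d+1), so C_{-1}(X) = chains X 0 = {0}
  automatically, since X contains no empty simplex.
  A chain is a real function on vertex sets vanishing off the simplices of the
  given size (coefficients w.r.t. the orthonormal basis X_d).\<close>

definition simplicial_complex :: "nat \<Rightarrow> nat set set \<Rightarrow> bool" where
  "simplicial_complex n X \<longleftrightarrow>
     (\<forall>\<sigma>\<in>X. \<sigma> \<noteq> {} \<and> \<sigma> \<subseteq> {1..n}) \<and>
     (\<forall>\<sigma>\<in>X. \<forall>\<tau>. \<tau> \<noteq> {} \<and> \<tau> \<subseteq> \<sigma> \<longrightarrow> \<tau> \<in> X)"

text \<open>Simplices with exactly k vertices (the paper's X_{k-1}).\<close>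
definition simp :: "nat set set \<Rightarrow> nat \<Rightarrow> nat set set" where
  "simp X k = {\<sigma>\<in>X. card \<sigma> = k}"

definition chains :: "nat set set \<Rightarrow> nat \<Rightarrow> (nat set \<Rightarrow> real) set" where
  "chains X k = {c. \<forall>\<sigma>. \<sigma> \<notin> simp X k \<longrightarrow> c \<sigma> = 0}"

definition incidence :: "nat set \<Rightarrow> nat set \<Rightarrow> real" where
  "incidence \<tau> \<sigma> =
     (if \<tau> \<subseteq> \<sigma> \<and> card (\<sigma> - \<tau>) = 1
      then (-1) ^ card {u\<in>\<sigma>. u < (THE v. v \<in> \<sigma> - \<tau>)} else 0)"

text \<open>Boundary map on chains whose simplices have k vertices (paper: B_{k-1}).\<close>
definition bnd :: "nat set set \<Rightarrow> nat \<Rightarrow> (nat set \<Rightarrow> real) \<Rightarrow> (nat set \<Rightarrow> real)" where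
  "bnd X k c = (\<lambda>\<tau>. if \<tau> \<in> X \<and> Suc (card \<tau>) = k
                     then (\<Sum>\<sigma>\<in>simp X k. incidence \<tau> \<sigma> * c \<sigma>) else 0)"

text \<open>Transpose of bnd X k (matrix transpose in the orthonormal simplex bases).\<close>
definition cobnd :: "nat set set \<Rightarrow> nat \<Rightarrow> (nat set \<Rightarrow> real) \<Rightarrow> (nat set \<Rightarrow> real)" where
  "cobnd X k c = (\<lambda>\<sigma>. if \<sigma> \<in> X \<and> card \<sigma> = k
                     then (\<Sum>\<tau>\<in>{\<tau>\<in>X. Suc (card \<tau>) = k}. incidence \<tau> \<sigma> * c \<tau>) else 0)"

definition chain_inner :: "nat set set \<Rightarrow> nat \<Rightarrow> (nat set \<Rightarrow> real) \<Rightarrow> (nat set \<Rightarrow> real) \<Rightarrow> real" where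
  "chain_inner X k x y = (\<Sum>\<sigma>\<in>simp X k. x \<sigma> * y \<sigma>)"

definition orth_proj :: "nat set set \<Rightarrow> nat \<Rightarrow> (nat set \<Rightarrow> real) set \<Rightarrow> (nat set \<Rightarrow> real) \<Rightarrow> (nat set \<Rightarrow> real)" where
  "orth_proj X k W x = (THE p. p \<in> W \<and> (\<forall>w\<in>W. chain_inner X k (\<lambda>\<sigma>. x \<sigma> - p \<sigma>) w = 0))"

definition conjugate ::
  "(nat set \<Rightarrow> real) set \<Rightarrow> ((nat set \<Rightarrow> real) \<Rightarrow> (nat set \<Rightarrow> real)) \<Rightarrow>
   (nat set \<Rightarrow> real) set \<Rightarrow> ((nat set \<Rightarrow> real) \<Rightarrow> (nat set \<Rightarrow> real)) \<Rightarrow> bool" where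
  "conjugate U A V C \<longleftrightarrow>
     (\<exists>\<Phi>. bij_betw \<Phi> U V \<and>
          (\<forall>x\<in>U. \<forall>y\<in>U. \<Phi> (\<lambda>\<sigma>. x \<sigma> + y \<sigma>) = (\<lambda>\<sigma>. \<Phi> x \<sigma> + \<Phi> y \<sigma>)) \<and>
          (\<forall>a. \<forall>x\<in>U. \<Phi> (\<lambda>\<sigma>. a * x \<sigma>) = (\<lambda>\<sigma>. a * \<Phi> x \<sigma>)) \<and>
          (\<forall>u\<in>U. \<Phi> (A u) = C (\<Phi> u)))"

end

theory Submission
  imports Defs "HOL-Library.Function_Algebras"
begin

text \<open>Let \<open>B\<close> be a linear map between finite-dimensional inner product spaces with
  adjoint \<open>B\<^sup>T\<close>. Since \<open>ker B\<^sup>T\<close> is orthogonal to \<open>im B\<close>, the map \<open>B\<^sup>T\<close> is injective on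
  \<open>im B\<close>; likewise \<open>B\<^sup>T B\<close> is injective on \<open>im B\<^sup>T\<close>, so by finite dimension it is onto, and
  hence \<open>B\<^sup>T\<close> maps \<open>im B\<close> bijectively onto \<open>im B\<^sup>T\<close>. This linear bijection conjugates
  \<open>\<theta>' = B F(B\<^sup>T \<theta>)\<close> to \<open>x' = B\<^sup>T B F(x)\<close>. For the projected system one uses instead the
  inverse of the bijection \<open>B : im B\<^sup>T \<rightarrow> im B\<close>, together with the fact that the orthogonal
  projection \<open>P z\<close> onto \<open>im B\<^sup>T\<close> is the unique point of \<open>im B\<^sup>T\<close> with \<open>B (P z) = B z\<close>.
  Both statements of the theorem are instances, for \<open>B = B\<^sub>d\<^sub>+\<^sub>1\<close> and for \<open>B = B\<^sub>d\<^sup>T\<close>.\<close>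

definition scale_fun :: "real \<Rightarrow> ('i \<Rightarrow> real) \<Rightarrow> 'i \<Rightarrow> real" where
  "scale_fun a x = (\<lambda>i. a * x i)"

interpretation fun_space: vector_space "scale_fun :: real \<Rightarrow> ('i \<Rightarrow> real) \<Rightarrow> 'i \<Rightarrow> real"
  by unfold_locales (auto simp: scale_fun_def fun_eq_iff algebra_simps)

lemma (in vector_space) inj_on_endomorphism_imp_surj_on:
  assumes W: "subspace W" and fin_dim: "W \<subseteq> span G" "finite G"
    and f: "Vector_Spaces.linear scale scale f" and fW: "f ` W \<subseteq> W" and inj: "inj_on f W"
  shows "f ` W = W"
proof -
  interpret f: Vector_Spaces.linear scale scale f by (fact f)
  obtain B where B: "B \<subseteq> W" "independent B" "W \<subseteq> span B"
    using basis_exists[of W] by metis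
  have span_B: "span B = W"
    using B W by (simp add: span_subspace)
  have "finite B"
    using independent_span_bound[OF fin_dim(2) B(2)] B(1) fin_dim(1) by blast
  have indep_fB: "independent (f ` B)"
    using f.dependent_inj_imageD[of B] B(2) inj span_B by auto
  have card_fB: "card (f ` B) = card B"
    using card_image inj_on_subset[OF inj B(1)] by blast
  have "W \<subseteq> span (f ` B)"
  proof
    fix w assume w: "w \<in> W"
    show "w \<in> span (f ` B)"
    proof (rule ccontr)
      assume w_out: "w \<notin> span (f ` B)"
      then have "w \<notin> f ` B"
        using span_base by blast
      moreover have "independent (insert w (f ` B))"
        using independent_insert indep_fB w_out by auto
      moreover have "insert w (f ` B) \<subseteq> span B"
        using span_B w B(1) fW by auto
      ultimately have "card B + 1 \<le> card B"
        using independent_span_bound[OF \<open>finite B\<close>] card_fB \<open>finite B\<close> by fastforce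
      then show False by simp
    qed
  qed
  then have "W \<subseteq> f ` W"
    using f.span_image[of B] span_B by simp
  then show ?thesis
    using fW by blast
qed

definition supported_on :: "'i set \<Rightarrow> ('i \<Rightarrow> real) set" where
  "supported_on I = {x. \<forall>i. i \<notin> I \<longrightarrow> x i = 0}"

definition inner_on :: "'i set \<Rightarrow> ('i \<Rightarrow> real) \<Rightarrow> ('i \<Rightarrow> real) \<Rightarrow> real" where
  "inner_on I x y = (\<Sum>i\<in>I. x i * y i)"

definition orth_proj_on :: "'i set \<Rightarrow> ('i \<Rightarrow> real) set \<Rightarrow> ('i \<Rightarrow> real) \<Rightarrow> 'i \<Rightarrow> real" where
  "orth_proj_on I W x = (THE p. p \<in> W \<and> (\<forall>w\<in>W. inner_on I (x - p) w = 0))"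

lemma inner_on_commute: "inner_on I x y = inner_on I y x"
  by (simp add: inner_on_def mult.commute)

lemma inner_on_diff_left: "inner_on I (x - y) z = inner_on I x z - inner_on I y z"
  by (simp add: inner_on_def left_diff_distrib sum_subtractf)

lemma inner_on_zero_left [simp]: "inner_on I 0 z = 0"
  by (simp add: inner_on_def)

lemma inner_on_self_eq_0:
  assumes "finite I" and "x \<in> supported_on I" and "inner_on I x x = 0"
  shows "x = 0"
proof -
  have "\<forall>i\<in>I. x i * x i = 0"
    using assms(1,3) unfolding inner_on_def by (subst (asm) sum_nonneg_eq_0_iff) auto
  then show ?thesis
    using assms(2) by (auto simp: supported_on_def fun_eq_iff)
qed

lemma sum_apply: "(\<Sum>a\<in>A. f a) i = (\<Sum>a\<in>A. f a i)"
  by (induction A rule: infinite_finite_induct) auto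

lemma subspace_supported_on: "fun_space.subspace (supported_on I)"
  by (auto simp: fun_space.subspace_def supported_on_def scale_fun_def)

lemma supported_on_subset_span:
  assumes "finite I"
  shows "supported_on I \<subseteq> fun_space.span ((\<lambda>i. indicator {i}) ` I)"
proof
  fix x assume x: "x \<in> supported_on I"
  have "x = (\<Sum>i\<in>I. scale_fun (x i) (indicator {i}))"
  proof
    fix j
    have "(\<Sum>i\<in>I. scale_fun (x i) (indicator {i})) j = (\<Sum>i\<in>I. if i = j then x i else 0)"
      unfolding sum_apply by (rule sum.cong) (auto simp: scale_fun_def)
    also have "\<dots> = x j"
      using x assms by (simp add: supported_on_def)
    finally show "x j = (\<Sum>i\<in>I. scale_fun (x i) (indicator {i})) j" ..
  qed
  also have "\<dots> \<in> fun_space.span ((\<lambda>i. indicator {i}) ` I)"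
    by (intro fun_space.span_sum fun_space.span_scale fun_space.span_base) auto
  finally show "x \<in> fun_space.span ((\<lambda>i. indicator {i}) ` I)" .
qed

lemma orth_proj_on_eqI:
  assumes "finite I" and W: "fun_space.subspace W" "W \<subseteq> supported_on I"
    and p: "p \<in> W" "\<forall>w\<in>W. inner_on I (x - p) w = 0"
  shows "orth_proj_on I W x = p"
  unfolding orth_proj_on_def
proof (rule the_equality)
  fix q assume q: "q \<in> W \<and> (\<forall>w\<in>W. inner_on I (x - q) w = 0)"
  have "q - p \<in> W"
    using fun_space.subspace_diff[OF W(1)] q p(1) by blast
  moreover have "inner_on I (q - p) (q - p) = inner_on I (x - p) (q - p) - inner_on I (x - q) (q - p)"
    using inner_on_diff_left[of I "x - p" "x - q" "q - p"] by simp
  ultimately have "inner_on I (q - p) (q - p) = 0"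
    using p(2) q by simp
  then have "q - p = 0"
    using inner_on_self_eq_0[OF \<open>finite I\<close>] \<open>q - p \<in> W\<close> W(2) by blast
  then show "q = p"
    by simp
qed (use p in blast)

lemma conjugateI:
  assumes "bij_betw \<Phi> U V" and "Vector_Spaces.linear scale_fun scale_fun \<Phi>"
    and "\<And>u. u \<in> U \<Longrightarrow> \<Phi> (A u) = C (\<Phi> u)"
  shows "conjugate U A V C"
proof -
  interpret \<Phi>: Vector_Spaces.linear scale_fun scale_fun \<Phi> by (fact assms(2))
  have "\<Phi> (\<lambda>\<sigma>. x \<sigma> + y \<sigma>) = (\<lambda>\<sigma>. \<Phi> x \<sigma> + \<Phi> y \<sigma>)" for x y
    using \<Phi>.add[of x y] by (simp add: plus_fun_def)
  moreover have "\<Phi> (\<lambda>\<sigma>. a * x \<sigma>) = (\<lambda>\<sigma>. a * \<Phi> x \<sigma>)" for a x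
    using \<Phi>.scale[of a x] by (simp add: scale_fun_def)
  ultimately show ?thesis
    using assms(1,3) unfolding conjugate_def by blast
qed

locale finite_adjoint_pair =
  fixes I J :: "'i set" and A At :: "('i \<Rightarrow> real) \<Rightarrow> 'i \<Rightarrow> real"
  assumes finite_I: "finite I" and finite_J: "finite J"
    and linear_A: "Vector_Spaces.linear scale_fun scale_fun A"
    and linear_At: "Vector_Spaces.linear scale_fun scale_fun At"
    and A_into: "A x \<in> supported_on J"
    and At_into: "At y \<in> supported_on I"
    and adjoint: "inner_on J (A x) y = inner_on I x (At y)"
begin

interpretation A: Vector_Spaces.linear scale_fun scale_fun A by (fact linear_A)
interpretation At: Vector_Spaces.linear scale_fun scale_fun At by (fact linear_At)

lemma swap: "finite_adjoint_pair J I At A"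
  by (rule finite_adjoint_pair.intro[OF finite_J finite_I linear_At linear_A At_into A_into])
    (metis adjoint inner_on_commute)

lemma image_A_inter_kernel_At:
  assumes "u \<in> A ` supported_on I" and "At u = 0"
  shows "u = 0"
proof -
  obtain x where "u = A x"
    using assms(1) by blast
  then have "inner_on J u u = 0"
    using adjoint[of x u] assms(2) by (simp add: inner_on_commute)
  then show ?thesis
    using inner_on_self_eq_0[OF finite_J] A_into \<open>u = A x\<close> by blast
qed

lemma inj_on_At_image_A: "inj_on At (A ` supported_on I)"
  using At.inj_on_iff_eq_0[OF A.subspace_image[OF subspace_supported_on]]
    image_A_inter_kernel_At by blast

lemma At_image_A: "At ` A ` supported_on I = At ` supported_on J"
proof -
  let ?V = "At ` supported_on J"
  have V_I: "?V \<subseteq> supported_on I"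
    using At_into by blast
  have "inj_on (At \<circ> A) ?V"
  proof (rule comp_inj_on)
    show "inj_on A ?V"
      by (rule finite_adjoint_pair.inj_on_At_image_A[OF swap])
    show "inj_on At (A ` ?V)"
      using inj_on_At_image_A by (rule inj_on_subset) (use V_I in blast)
  qed
  moreover have "(At \<circ> A) ` ?V \<subseteq> ?V"
    using A_into by auto
  ultimately have "(At \<circ> A) ` ?V = ?V"
    using fun_space.inj_on_endomorphism_imp_surj_on[OF At.subspace_image[OF subspace_supported_on]
        subset_trans[OF V_I supported_on_subset_span[OF finite_I]] finite_imageI[OF finite_I]
        Vector_Spaces.linear_compose[OF linear_A linear_At]]
    by blast
  then have "?V = At ` A ` ?V"
    by (simp add: image_comp)
  also have "\<dots> \<subseteq> At ` A ` supported_on I"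
    using V_I by (intro image_mono)
  finally have "?V \<subseteq> At ` A ` supported_on I" .
  moreover have "At ` A ` supported_on I \<subseteq> ?V"
    using A_into by (intro image_mono) blast
  ultimately show ?thesis
    by (rule subset_antisym[rotated])
qed

lemma bij_betw_At_image_A: "bij_betw At (A ` supported_on I) (At ` supported_on J)"
  by (simp add: bij_betw_def inj_on_At_image_A At_image_A)

lemma orth_proj_on_image_At:
  assumes "z \<in> supported_on I"
  shows "orth_proj_on I (At ` supported_on J) z \<in> At ` supported_on J"
    and "A (orth_proj_on I (At ` supported_on J) z) = A z"
proof -
  let ?V = "At ` supported_on J"
  obtain p where p: "p \<in> ?V" "A p = A z"
    using finite_adjoint_pair.At_image_A[OF swap] assms by (metis imageE imageI)
  have "\<forall>w\<in>?V. inner_on I (z - p) w = 0"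
  proof
    fix w assume "w \<in> ?V"
    then obtain t where "w = At t"
      by blast
    moreover have "A (z - p) = 0"
      using A.diff[of z p] p(2) by simp
    ultimately show "inner_on I (z - p) w = 0"
      using adjoint[of "z - p" t] by simp
  qed
  then have "orth_proj_on I ?V z = p"
    using orth_proj_on_eqI[OF finite_I At.subspace_image[OF subspace_supported_on] _ p(1)] At_into
    by blast
  then show "orth_proj_on I ?V z \<in> ?V" and "A (orth_proj_on I ?V z) = A z"
    using p by simp_all
qed

lemma linear_inverse_on_image_At:
  obtains g where "bij_betw g (A ` supported_on I) (At ` supported_on J)"
    and "Vector_Spaces.linear scale_fun scale_fun g"
    and "\<And>v. v \<in> At ` supported_on J \<Longrightarrow> g (A v) = v"
proof -
  let ?V = "At ` supported_on J"
  interpret vector_space_pair scale_fun scale_fun ..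
  have span_V: "fun_space.span ?V = ?V"
    using At.subspace_image[OF subspace_supported_on] by simp
  obtain g where g: "Vector_Spaces.linear scale_fun scale_fun g" and g_A: "\<forall>v\<in>?V. g (A v) = v"
    using linear_inj_on_left_inverse[OF linear_A, of ?V]
      finite_adjoint_pair.inj_on_At_image_A[OF swap] span_V
    by auto
  have "bij_betw g (A ` ?V) ?V"
    using g_A by (auto intro!: bij_betw_byWitness[where f' = A])
  then have "bij_betw g (A ` supported_on I) ?V"
    using finite_adjoint_pair.At_image_A[OF swap] by simp
  then show thesis
    using that g g_A by blast
qed

end

lemma conjugate_by_adjoint:
  assumes "finite_adjoint_pair I J A At"
  shows "conjugate (A ` supported_on I) (\<lambda>\<theta>. A (F (At \<theta>)))
           (At ` supported_on J) (\<lambda>x. At (A (F x)))"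
  using conjugateI[OF finite_adjoint_pair.bij_betw_At_image_A finite_adjoint_pair.linear_At] assms
  by simp

lemma conjugate_by_inverse:
  assumes "finite_adjoint_pair I J A At" and F: "\<forall>x\<in>supported_on I. F x \<in> supported_on I"
  shows "conjugate (A ` supported_on I) (\<lambda>\<theta>. A (F (At \<theta>))) (At ` supported_on J)
           (\<lambda>y. orth_proj_on I (At ` supported_on J) (F (At (A y))))"
proof -
  interpret finite_adjoint_pair I J A At by fact
  obtain g where g: "bij_betw g (A ` supported_on I) (At ` supported_on J)"
    "Vector_Spaces.linear scale_fun scale_fun g"
    and g_A: "\<And>v. v \<in> At ` supported_on J \<Longrightarrow> g (A v) = v"
    using linear_inverse_on_image_At by blast
  show ?thesis
  proof (rule conjugateI[OF g])
    fix u assume "u \<in> A ` supported_on I"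
    then obtain v where v: "v \<in> At ` supported_on J" "u = A v"
      using finite_adjoint_pair.At_image_A[OF swap] by (metis imageE)
    define z where "z = F (At u)"
    have "z \<in> supported_on I"
      using F At_into z_def by blast
    then have "g (A z) = orth_proj_on I (At ` supported_on J) z"
      using g_A orth_proj_on_image_At by metis
    then show "g (A (F (At u))) = orth_proj_on I (At ` supported_on J) (F (At (A (g u))))"
      using g_A v z_def by simp
  qed
qed

lemma finite_simplicial_complex: "simplicial_complex n X \<Longrightarrow> finite X"
  unfolding simplicial_complex_def by (rule finite_subset[of X "Pow {1..n}"]) auto

lemma chains_eq_supported_on: "chains X k = supported_on (simp X k)"
  by (simp add: chains_def supported_on_def)

lemma orth_proj_eq_orth_proj_on: "orth_proj X k = orth_proj_on (simp X k)"
  by (intro ext) (simp add: orth_proj_def orth_proj_on_def chain_inner_def inner_on_def fun_diff_def)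

lemma linear_bnd: "Vector_Spaces.linear scale_fun scale_fun (bnd X k)"
  unfolding Vector_Spaces.linear_iff
  by (auto simp: fun_space.vector_space_axioms bnd_def scale_fun_def fun_eq_iff sum.distrib
      distrib_left sum_distrib_left mult.left_commute)

lemma linear_cobnd: "Vector_Spaces.linear scale_fun scale_fun (cobnd X k)"
  unfolding Vector_Spaces.linear_iff
  by (auto simp: fun_space.vector_space_axioms cobnd_def scale_fun_def fun_eq_iff sum.distrib
      distrib_left sum_distrib_left mult.left_commute)

lemma inner_on_bnd_cobnd:
  "inner_on (simp X k) (bnd X (Suc k) x) y = inner_on (simp X (Suc k)) x (cobnd X (Suc k) y)"
proof -
  have faces: "{\<tau>\<in>X. Suc (card \<tau>) = Suc k} = simp X k"
    by (auto simp: simp_def)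
  have "inner_on (simp X k) (bnd X (Suc k) x) y
      = (\<Sum>\<tau>\<in>simp X k. \<Sum>\<sigma>\<in>simp X (Suc k). incidence \<tau> \<sigma> * x \<sigma> * y \<tau>)"
    unfolding inner_on_def bnd_def
    by (intro sum.cong refl) (auto simp: simp_def sum_distrib_right)
  also have "\<dots> = (\<Sum>\<sigma>\<in>simp X (Suc k). \<Sum>\<tau>\<in>simp X k. incidence \<tau> \<sigma> * x \<sigma> * y \<tau>)"
    by (rule sum.swap)
  also have "\<dots> = inner_on (simp X (Suc k)) x (cobnd X (Suc k) y)"
    unfolding inner_on_def cobnd_def faces
    by (intro sum.cong refl) (auto simp: simp_def sum_distrib_left mult_ac)
  finally show ?thesis .
qed

lemma finite_adjoint_pair_boundary:
  assumes "simplicial_complex n X"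
  shows "finite_adjoint_pair (simp X (Suc k)) (simp X k) (bnd X (Suc k)) (cobnd X (Suc k))"
  by (rule finite_adjoint_pair.intro[OF _ _ linear_bnd linear_cobnd _ _ inner_on_bnd_cobnd])
    (use finite_simplicial_complex[OF assms] in \<open>auto simp: simp_def supported_on_def bnd_def cobnd_def\<close>)

theorem mainTheorem10:
  fixes n d :: nat and X :: "nat set set"
    and F H :: "(nat set \<Rightarrow> real) \<Rightarrow> (nat set \<Rightarrow> real)"
  assumes X: "simplicial_complex n X"
    and F: "\<forall>x\<in>chains X (d+2). F x \<in> chains X (d+2)"
    and H: "\<forall>x\<in>chains X d. H x \<in> chains X d"
  shows
    "conjugate (bnd X (d+2) ` chains X (d+2)) (\<lambda>\<theta>. bnd X (d+2) (F (cobnd X (d+2) \<theta>)))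
               (cobnd X (d+2) ` chains X (d+1)) (\<lambda>x. cobnd X (d+2) (bnd X (d+2) (F x)))
   \<and> conjugate (bnd X (d+2) ` chains X (d+2)) (\<lambda>\<theta>. bnd X (d+2) (F (cobnd X (d+2) \<theta>)))
               (cobnd X (d+2) ` chains X (d+1))
               (\<lambda>y. orth_proj X (d+2) (cobnd X (d+2) ` chains X (d+1))
                      (F (cobnd X (d+2) (bnd X (d+2) y))))
   \<and> conjugate (cobnd X (d+1) ` chains X d) (\<lambda>\<theta>. cobnd X (d+1) (H (bnd X (d+1) \<theta>)))
               (bnd X (d+1) ` chains X (d+1)) (\<lambda>x. bnd X (d+1) (cobnd X (d+1) (H x)))
   \<and> conjugate (cobnd X (d+1) ` chains X d) (\<lambda>\<theta>. cobnd X (d+1) (H (bnd X (d+1) \<theta>)))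
               (bnd X (d+1) ` chains X (d+1))
               (\<lambda>y. orth_proj X d (bnd X (d+1) ` chains X (d+1))
                      (H (bnd X (d+1) (cobnd X (d+1) y))))"
proof -
  have B: "finite_adjoint_pair (simp X (d+2)) (simp X (d+1)) (bnd X (d+2)) (cobnd X (d+2))"
    using finite_adjoint_pair_boundary[OF X, of "d+1"] by (simp add: numeral_2_eq_2)
  have B': "finite_adjoint_pair (simp X d) (simp X (d+1)) (cobnd X (d+1)) (bnd X (d+1))"
    using finite_adjoint_pair.swap[OF finite_adjoint_pair_boundary[OF X, of d]] by simp
  show ?thesis
    using F H conjugate_by_adjoint[OF B] conjugate_by_inverse[OF B]
      conjugate_by_adjoint[OF B'] conjugate_by_inverse[OF B']
    unfolding chains_eq_supported_on orth_proj_eq_orth_proj_on by blast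
qed

end
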